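(* Let $N\in\mathbb N$, let $T$ be an $N$-valid tree, and let $\tilde T$ and $\Gamma$ be the tree and digraph constructed from $T$ as described in the context. Let $m_0$ be a mask whose values $\lambda_{\mathbf c_1,\dots,\mathbf c_{N+1}}$ are compatible with $T$. Define $N$-dimensional arrays $A^{(n)}=(a^{(n)}_{\mathbf i_1,\dots,\mathbf i_N})_{\mathbf i_1,\dots,\mathbf i_N\in GF(p^s)}$, $n=0,1,2,\dots$, by $$a^{(0)}_{\mathbf i_1,\dots,\mathbf i_N}=\lambda_{\mathbf i_1,\dots,\mathbf i_N,\mathbf 0}\,\lambda_{\mathbf i_2,\dots,\mathbf i_N,\mathbf 0,\mathbf 0}\cdots\lambda_{\mathbf i_N,\mathbf 0,\dots,\mathbf 0},\qquad a^{(n)}_{\mathbf i_1,\dots,\mathbf i_N}=\sum_{\mathbf j\in GF(p^s)}\lambda_{\mathbf i_1,\dots,\mathbf i_N,\mathbf j}\,a^{(n-1)}_{\mathbf i_2,\dots,\mathbf i_N,\mathbf j}\ (n\ge1).$$ Then for every $n\ge0$ and every vertex $(\mathbf i_1,\dots,\mathbf i_N)$ of $\tilde T$ of level $l\le N+n$ one has $a^{(n)}_{\mathbf i_1,\dots,\mathbf i_N}=1$.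
   Context: Let $p$ be a prime, $s\in\mathbb N$, and $GF(p^s)$ the field with $p^s$ elements; each $\mathbf u\in GF(p^s)$ is identified with a vector $(u^{(0)},\dots,u^{(s-1)})\in\{0,\dots,p-1\}^s$ via a fixed basis over $GF(p)$, and $\mathbf 0$ denotes the zero element. The local field $F^{(s)}$ of characteristic $p$ is the field of formal Laurent series $\sum_{j\ge k}\mathbf x_j t^j$, $\mathbf x_j\in GF(p^s)$, identified with two-sided sequences $x=(\mathbf x_j)_{j\in\mathbb Z}$ having only finitely many nonzero $\mathbf x_j$ with $j<0$. For $\mathbf a\in GF(p^s)$ and $k\in\mathbb Z$, $\mathbf a g_k$ denotes the sequence with entry $\mathbf a$ at position $k$ and $\mathbf 0$ elsewhere. The dilation is $\mathcal A(\sum_n \mathbf x_n g_n)=\sum_n\mathbf x_n g_{n-1}$. For $\mathbf u\in GF(p^s)$, $k\in\mathbb Z$, the Rademacher character is $\mathbf r_k^{\mathbf u}(x)=\exp\big(\tfrac{2\pi i}{p}\sum_{l=0}^{s-1}u^{(l)}x_k^{(l)}\big)$. Every continuous character of the additive group of $F^{(s)}$ is uniquely $\chi=\prod_{k\in\mathbb Z}\mathbf r_k^{\mathbf b_k}$ with $\mathbf b_k=\mathbf 0$ for all sufficiently large $k$; write $(\chi,x)=\chi(x)$ and let $\chi\mathcal A^{j}$ be the character $x\mapsto\chi(\mathcal A^{j}x)$. For $\mathbf a_{-N},\dots,\mathbf a_0\in GF(p^s)$ let $C(\mathbf a_{-N},\dots,\mathbf a_0)$ be the set of characters $\prod_k\mathbf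 r_k^{\mathbf b_k}$ with $\mathbf b_k=\mathbf a_k$ for $-N\le k\le 0$ and $\mathbf b_k=\mathbf 0$ for $k\ge1$ (the coset $(F^{(s)}_{-N})^\perp\mathbf r_{-N}^{\mathbf a_{-N}}\cdots\mathbf r_0^{\mathbf a_0}$). Mask: let $H_0^{(N+1)}=\{\mathbf a_{-1}g_{-1}\dot+\cdots\dot+\mathbf a_{-(N+1)}g_{-(N+1)}:\mathbf a_i\in GF(p^s)\}$. A mask is a function $m_0(\chi)=\frac1p\sum_{h\in H_0^{(N+1)}}\beta_h\overline{(\chi\mathcal A^{-1},h)}$ with $\beta_h\in\mathbb C$; it is constant on each set $C(\mathbf a_{-N},\dots,\mathbf a_0)$, and we put $\lambda_{\mathbf a_{-N},\dots,\mathbf a_0}=|m_0(\chi)|^2$ for $\chi\in C(\mathbf a_{-N},\dots,\mathbf a_0)$ (an array indexed by $GF(p^s)^{N+1}$). Trees: consider a finite rooted tree $T$ whose vertices carry labels, with arcs directed from each non-root vertex to its parent; the level of a vertex is its distance to the root. $T$ is $N$-valid if (1) every label is an element of $GF(p^s)$; (2) the root and all vertices of levels $1,\dots,N-1$ have label $\mathbf 0$; (3) for every $(\mathbf c_1,\dots,\mathbf c_N)\in GF(p^s)^N$ there is exactly one directed path $v_1\to v_2\to\cdots\to v_N$ in $T$ ($v_{i+1}$ the parent of $v_i$) whose labels are $\mathbf c_1,\dots,\mathbf c_N$. The tree $\tilde T$ has as vertices the label tuples $(\mathbf c_1,\dots,\mathbf c_N)$ of such paths, with an arc from the tuple of the path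 starting at $v$ to the tuple of the path starting at the parent of $v$; its root is $(\mathbf 0,\dots,\mathbf 0)$ and the level of a tuple in $\tilde T$ equals (level of $v_1$ in $T$) $-(N-1)$. The digraph $\Gamma$ has the same vertices; for a vertex $B=(\mathbf b_1,\dots,\mathbf b_N)$ its successor set is $D(B)=\{\mathbf d\in GF(p^s): (\mathbf b_2,\dots,\mathbf b_N,\mathbf d)$ is a vertex of $\tilde T$ of level strictly less than the level of $B\}$, and $B$ is connected in $\Gamma$ to each $(\mathbf b_2,\dots,\mathbf b_N,\mathbf d)$, $\mathbf d\in D(B)$. The values $\lambda$ are compatible with $T$ if: $\lambda_{\mathbf 0,\dots,\mathbf 0}=1$ and $\lambda_{\mathbf 0,\dots,\mathbf 0,\mathbf d}=0$ for $\mathbf d\ne\mathbf 0$; and for every vertex $B=(\mathbf b_1,\dots,\mathbf b_N)\ne(\mathbf 0,\dots,\mathbf 0)$ of $\tilde T$, $\sum_{\mathbf d\in D(B)}\lambda_{\mathbf b_1,\dots,\mathbf b_N,\mathbf d}=1$ and $\lambda_{\mathbf b_1,\dots,\mathbf b_N,\mathbf d}=0$ for $\mathbf d\notin D(B)$. The component $a_{\mathbf i_1,\dots,\mathbf i_N}$ of an $N$-dimensional array is said to correspond to the vertex $(\mathbf i_1,\dots,\mathbf i_N)$. *)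

theory Defs
  imports Complex_Main "HOL-Computational_Algebra.Primes"
begin

text \<open>An element u of GF(p^s) is identified with its coordinate vector
  (u^(0),...,u^(s-1)) in {0,...,p-1}^s, represented as a list of length s.
  Only the additive structure (through the characters) and the zero element
  are used in the statement.\<close>

definition GF :: "nat \<Rightarrow> nat \<Rightarrow> nat list set" where
  "GF p s = {u. length u = s \<and> (\<forall>x\<in>set u. x < p)}"

definition gzero :: "nat \<Rightarrow> nat list" where
  "gzero s = replicate s 0"

definition tuples :: "nat \<Rightarrow> nat \<Rightarrow> nat \<Rightarrow> nat list list set" where
  "tuples p s N = {cs. length cs = N \<and> set cs \<subseteq> GF p s}"

definition gip :: "nat \<Rightarrow> nat list \<Rightarrow> nat list \<Rightarrow> nat" where
  "gip s u v = (\<Sum>l<s. u ! l * v ! l)"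

text \<open>An element h = a_{-1} g_{-1} + ... + a_{-(N+1)} g_{-(N+1)} of H_0^(N+1)
  is represented by the list [a_{-1}, ..., a_{-(N+1)}].  A coset
  C(a_{-N},...,a_0) is represented by the list cs = [a_{-N},...,a_0].
  For chi in that coset, (chi A^{-1}, h) = chi(A^{-1} h), and A^{-1} h has entry
  a_{k-1} at position k (k = -N..0); hence
  (chi A^{-1}, h) = exp(2 pi i/p * sum_{k=-N}^{0} sum_l b_k^(l) a_{k-1}^(l)),
  i.e. pairing cs!i with (rev h)!i for i = 0..N.\<close>
definition char_val :: "nat \<Rightarrow> nat \<Rightarrow> nat \<Rightarrow> nat list list \<Rightarrow> nat list list \<Rightarrow> complex" where
  "char_val p s N cs h =
     exp (2 * pi * \<i> * of_nat (\<Sum>i\<le>N. gip s (cs ! i) (rev h ! i)) / of_nat p)"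

definition mask_m0 :: "nat \<Rightarrow> nat \<Rightarrow> nat \<Rightarrow> (nat list list \<Rightarrow> complex) \<Rightarrow> nat list list \<Rightarrow> complex" where
  "mask_m0 p s N \<beta> cs =
     (1 / of_nat p) * (\<Sum>h\<in>tuples p s (N+1). \<beta> h * cnj (char_val p s N cs h))"

definition mask_lambda :: "nat \<Rightarrow> nat \<Rightarrow> nat \<Rightarrow> (nat list list \<Rightarrow> complex) \<Rightarrow> nat list list \<Rightarrow> real" where
  "mask_lambda p s N \<beta> cs = (cmod (mask_m0 p s N \<beta> cs))\<^sup>2"

text \<open>A finite rooted tree: vertex set V, root r, parent map par (arcs go from a
  vertex to its parent; by convention par r = r, the root having no parent).\<close>
definition rooted_tree :: "'v set \<Rightarrow> 'v \<Rightarrow> ('v \<Rightarrow> 'v) \<Rightarrow> bool" where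
  "rooted_tree V r par \<longleftrightarrow> finite V \<and> r \<in> V \<and> par r = r \<and>
     (\<forall>v\<in>V. par v \<in> V) \<and> (\<forall>v\<in>V. \<exists>k. (par ^^ k) v = r)"

definition level :: "'v \<Rightarrow> ('v \<Rightarrow> 'v) \<Rightarrow> 'v \<Rightarrow> nat" where
  "level r par v = (LEAST k. (par ^^ k) v = r)"

definition path_labels :: "('v \<Rightarrow> 'v) \<Rightarrow> ('v \<Rightarrow> nat list) \<Rightarrow> nat \<Rightarrow> 'v \<Rightarrow> nat list list" where
  "path_labels par lab N v = map (\<lambda>i. lab ((par ^^ i) v)) [0..<N]"

text \<open>A directed path v_1 -> ... -> v_N exists in T iff v_1,...,v_{N-1} are not
  the root, i.e. level v_1 >= N-1; it is determined by its start v_1.\<close>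
definition valid_tree :: "nat \<Rightarrow> nat \<Rightarrow> nat \<Rightarrow> 'v set \<Rightarrow> 'v \<Rightarrow> ('v \<Rightarrow> 'v) \<Rightarrow> ('v \<Rightarrow> nat list) \<Rightarrow> bool" where
  "valid_tree p s N V r par lab \<longleftrightarrow>
     rooted_tree V r par \<and>
     (\<forall>v\<in>V. lab v \<in> GF p s) \<and>
     (\<forall>v\<in>V. level r par v \<le> N - 1 \<longrightarrow> lab v = gzero s) \<and>
     (\<forall>c\<in>tuples p s N. \<exists>!v. v \<in> V \<and> N - 1 \<le> level r par v \<and> path_labels par lab N v = c)"

definition tilde_level :: "nat \<Rightarrow> 'v set \<Rightarrow> 'v \<Rightarrow> ('v \<Rightarrow> 'v) \<Rightarrow> ('v \<Rightarrow> nat list) \<Rightarrow> nat list list \<Rightarrow> nat" where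
  "tilde_level N V r par lab c =
     level r par (THE v. v \<in> V \<and> N - 1 \<le> level r par v \<and> path_labels par lab N v = c) - (N - 1)"

definition Dset :: "nat \<Rightarrow> nat \<Rightarrow> nat \<Rightarrow> 'v set \<Rightarrow> 'v \<Rightarrow> ('v \<Rightarrow> 'v) \<Rightarrow> ('v \<Rightarrow> nat list) \<Rightarrow> nat list list \<Rightarrow> nat list set" where
  "Dset p s N V r par lab B =
     {d \<in> GF p s. tilde_level N V r par lab (tl B @ [d]) < tilde_level N V r par lab B}"

definition compatible :: "nat \<Rightarrow> nat \<Rightarrow> nat \<Rightarrow> 'v set \<Rightarrow> 'v \<Rightarrow> ('v \<Rightarrow> 'v) \<Rightarrow> ('v \<Rightarrow> nat list) \<Rightarrow> (nat list list \<Rightarrow> real) \<Rightarrow> bool" where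
  "compatible p s N V r par lab lam \<longleftrightarrow>
     lam (replicate (N + 1) (gzero s)) = 1 \<and>
     (\<forall>d\<in>GF p s. d \<noteq> gzero s \<longrightarrow> lam (replicate N (gzero s) @ [d]) = 0) \<and>
     (\<forall>B\<in>tuples p s N. B \<noteq> replicate N (gzero s) \<longrightarrow>
        (\<Sum>d\<in>Dset p s N V r par lab B. lam (B @ [d])) = 1 \<and>
        (\<forall>d\<in>GF p s - Dset p s N V r par lab B. lam (B @ [d]) = 0))"

fun arr :: "nat \<Rightarrow> nat \<Rightarrow> nat \<Rightarrow> (nat list list \<Rightarrow> real) \<Rightarrow> nat \<Rightarrow> nat list list \<Rightarrow> real" where
  "arr p s N lam 0 i = (\<Prod>k<N. lam (drop k i @ replicate (k + 1) (gzero s)))"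
| "arr p s N lam (Suc n) i = (\<Sum>j\<in>GF p s. lam (i @ [j]) * arr p s N lam n (tl i @ [j]))"

end

theory Submission
  imports Defs
begin

text \<open>Vertices of \<open>T\<close> of level at most \<open>N - 1\<close> carry the label \<open>0\<close>. Hence for a vertex
  \<open>B\<close> of \<open>T~\<close> of level between \<open>1\<close> and \<open>N\<close> the parent of \<open>B\<close> is obtained by shifting in a
  \<open>0\<close>, and \<open>D(B) = {0}\<close>; compatibility then gives \<open>\<lambda>(B,0) = 1\<close>, so every factor of
  \<open>a\<^sup>(\<^sup>0\<^sup>)\<close> at a vertex of level at most \<open>N\<close> equals \<open>1\<close>. For \<open>n \<ge> 1\<close>, compatibility
  confines the sum defining \<open>a\<^sup>(\<^sup>n\<^sup>)\<^sub>B\<close> to \<open>j \<in> D(B)\<close> (to \<open>j = 0\<close> at the root), where the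
  shifted tuple has smaller level; so by induction on \<open>n\<close> the entry is the total weight of
  \<open>\<lambda>\<close> over \<open>D(B)\<close>, which is \<open>1\<close>.\<close>

lemma finite_GF: "finite (GF p s)"
proof (rule finite_subset)
  show "GF p s \<subseteq> {xs. set xs \<subseteq> {..<p} \<and> length xs = s}" by (auto simp: GF_def)
qed (simp add: finite_lists_length_eq)

lemma gzero_in_GF: "0 < p \<Longrightarrow> gzero s \<in> GF p s"
  by (simp add: GF_def gzero_def)

lemma tl_append_in_tuples:
  "\<lbrakk>c \<in> tuples p s N; d \<in> GF p s; 1 \<le> N\<rbrakk> \<Longrightarrow> tl c @ [d] \<in> tuples p s N"
  by (auto simp: tuples_def dest: list.set_sel(2)[rotated])

lemma tl_replicate_append_same: "0 < n \<Longrightarrow> tl (replicate n x) @ [x] = replicate n x"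
  by (cases n) (simp_all add: replicate_append_same)

lemma drop_append_replicate_Suc:
  "k < length c \<Longrightarrow>
   drop (Suc k) c @ replicate (Suc k) x = tl (drop k c @ replicate k x) @ [x]"
  by (simp add: drop_Suc drop_tl replicate_append_same)

lemma path_labels_parent:
  assumes "1 \<le> N"
  shows "path_labels par lab N (par w) = tl (path_labels par lab N w) @ [lab ((par ^^ N) w)]"
proof -
  define f where "f = (\<lambda>i. lab ((par ^^ i) w))"
  have "path_labels par lab N (par w) = map (f \<circ> Suc) [0..<N]"
    by (simp add: path_labels_def f_def funpow_Suc_right del: funpow.simps)
  also have "\<dots> = map f [1..<Suc N]"
    by (metis map_Suc_upt map_map One_nat_def)
  also have "\<dots> = tl (map f [0..<N]) @ [f N]"
    using assms by (simp add: map_tl[symmetric] tl_upt)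
  finally show ?thesis by (simp add: path_labels_def f_def)
qed

lemma level_le: "(par ^^ k) v = r \<Longrightarrow> level r par v \<le> k"
  unfolding level_def by (rule Least_le)

lemma funpow_level_eq_root:
  "\<lbrakk>rooted_tree V r par; v \<in> V\<rbrakk> \<Longrightarrow> (par ^^ level r par v) v = r"
  unfolding rooted_tree_def level_def by (metis (mono_tags, lifting) LeastI_ex)

lemma funpow_in_vertices: "\<lbrakk>rooted_tree V r par; v \<in> V\<rbrakk> \<Longrightarrow> (par ^^ k) v \<in> V"
  by (induction k) (auto simp: rooted_tree_def)

lemma level_funpow:
  assumes T: "rooted_tree V r par" and v: "v \<in> V"
  shows "level r par ((par ^^ k) v) = level r par v - k"
proof (rule antisym)
  let ?l = "level r par v"
  have root_fixed: "(par ^^ j) r = r" for j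
    using T by (induction j) (auto simp: rooted_tree_def)
  have "(par ^^ (?l - k)) ((par ^^ k) v) = r"
  proof (cases "k \<le> ?l")
    case True
    then have "(par ^^ (?l - k)) ((par ^^ k) v) = (par ^^ ?l) v"
      by (metis funpow_add le_add_diff_inverse2 o_apply)
    then show ?thesis using funpow_level_eq_root[OF T v] by simp
  next
    case False
    then have "(par ^^ k) v = (par ^^ (k - ?l)) ((par ^^ ?l) v)"
      by (metis funpow_add le_add_diff_inverse2 nat_le_linear o_apply)
    then show ?thesis using False funpow_level_eq_root[OF T v] root_fixed by simp
  qed
  then show "level r par ((par ^^ k) v) \<le> ?l - k" by (rule level_le)
  have "(par ^^ (level r par ((par ^^ k) v) + k)) v = r"
    using funpow_level_eq_root[OF T funpow_in_vertices[OF T v]] by (simp add: funpow_add)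
  then show "?l - k \<le> level r par ((par ^^ k) v)" using level_le by fastforce
qed

locale N_valid_tree =
  fixes p s N :: nat and V :: "'v set" and r :: 'v
    and par :: "'v \<Rightarrow> 'v" and lab :: "'v \<Rightarrow> nat list"
  assumes valid: "valid_tree p s N V r par lab"
    and N_pos: "1 \<le> N"
    and p_pos: "0 < p"
begin

abbreviation tlevel :: "nat list list \<Rightarrow> nat" where
  "tlevel \<equiv> tilde_level N V r par lab"

abbreviation zeros :: "nat list list" where
  "zeros \<equiv> replicate N (gzero s)"

lemma rooted: "rooted_tree V r par"
  using valid by (simp add: valid_tree_def)

lemma label_in_GF: "v \<in> V \<Longrightarrow> lab v \<in> GF p s"
  using valid by (simp add: valid_tree_def)

lemma label_near_root: "\<lbrakk>v \<in> V; level r par v \<le> N - 1\<rbrakk> \<Longrightarrow> lab v = gzero s"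
  using valid by (simp add: valid_tree_def)

lemma path_start_unique:
  "c \<in> tuples p s N \<Longrightarrow> \<exists>!v. v \<in> V \<and> N - 1 \<le> level r par v \<and> path_labels par lab N v = c"
  using valid by (simp add: valid_tree_def)

lemma obtain_path_start:
  assumes "c \<in> tuples p s N"
  obtains v where "v \<in> V" "N - 1 \<le> level r par v" "path_labels par lab N v = c"
  using path_start_unique[OF assms] by blast

lemma tilde_level_path_start:
  "\<lbrakk>c \<in> tuples p s N; v \<in> V; N - 1 \<le> level r par v; path_labels par lab N v = c\<rbrakk>
   \<Longrightarrow> tlevel c = level r par v - (N - 1)"
  unfolding tilde_level_def by (subst the1_equality[OF path_start_unique]) auto

lemma path_labels_near_root:
  assumes "v \<in> V" "level r par v \<le> N - 1"
  shows "path_labels par lab N v = zeros"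
proof -
  have "lab ((par ^^ i) v) = gzero s" for i
    using assms level_funpow[OF rooted assms(1)] funpow_in_vertices[OF rooted assms(1)]
    by (intro label_near_root) auto
  then show ?thesis by (simp add: path_labels_def map_replicate_const)
qed

lemma tilde_level_zero_iff:
  assumes c: "c \<in> tuples p s N"
  shows "tlevel c = 0 \<longleftrightarrow> c = zeros"
proof -
  obtain w where w: "w \<in> V" "N - 1 \<le> level r par w" "path_labels par lab N w = c"
    using obtain_path_start[OF c] .
  show ?thesis
  proof
    assume "tlevel c = 0"
    then show "c = zeros"
      using w tilde_level_path_start[OF c w] path_labels_near_root by simp
  next
    assume c_zeros: "c = zeros"
    define u where "u = (par ^^ (level r par w - (N - 1))) w"
    have u: "u \<in> V" "level r par u = N - 1"
      using w level_funpow[OF rooted w(1)] funpow_in_vertices[OF rooted w(1)]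
      by (auto simp: u_def)
    then show "tlevel c = 0"
      using tilde_level_path_start[OF c u(1)] path_labels_near_root c_zeros by simp
  qed
qed

lemma last_entry_zero:
  assumes c: "c \<in> tuples p s N" and low: "tlevel c < N"
  shows "c ! (N - 1) = gzero s"
proof -
  obtain w where w: "w \<in> V" "N - 1 \<le> level r par w" "path_labels par lab N w = c"
    using obtain_path_start[OF c] .
  have "c ! (N - 1) = lab ((par ^^ (N - 1)) w)"
    using w(3) N_pos by (auto simp: path_labels_def)
  also have "\<dots> = gzero s"
    using tilde_level_path_start[OF c w] low level_funpow[OF rooted w(1)]
      funpow_in_vertices[OF rooted w(1)]
    by (intro label_near_root) auto
  finally show ?thesis .
qed

lemma parent_tuple:
  assumes c: "c \<in> tuples p s N" and pos: "1 \<le> tlevel c"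
  obtains d where "d \<in> GF p s" "tlevel (tl c @ [d]) = tlevel c - 1"
proof -
  obtain w where w: "w \<in> V" "N - 1 \<le> level r par w" "path_labels par lab N w = c"
    using obtain_path_start[OF c] .
  let ?d = "lab ((par ^^ N) w)"
  have d: "?d \<in> GF p s"
    using label_in_GF funpow_in_vertices[OF rooted w(1)] by blast
  have pw: "par w \<in> V" "level r par (par w) = level r par w - 1"
    using funpow_in_vertices[OF rooted w(1), of 1] level_funpow[OF rooted w(1), of 1] by auto
  have "tlevel (tl c @ [?d]) = level r par (par w) - (N - 1)"
    using tilde_level_path_start[OF c w] pos pw N_pos
      path_labels_parent[OF N_pos, of par lab w, unfolded w(3)]
    by (intro tilde_level_path_start tl_append_in_tuples[OF c d]) auto
  then show ?thesis
    using that[OF d] tilde_level_path_start[OF c w] pw(2) by simp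
qed

lemma tilde_level_shift_zero:
  assumes c: "c \<in> tuples p s N" and low: "tlevel c \<le> N"
  shows "tlevel (tl c @ [gzero s]) = tlevel c - 1"
proof (cases "tlevel c = 0")
  case True
  then have "c = zeros" using tilde_level_zero_iff[OF c] by simp
  then have "tl c @ [gzero s] = c"
    using N_pos tl_replicate_append_same[of N] by (metis less_le_trans zero_less_one)
  then show ?thesis using True by simp
next
  case False
  then obtain d where d: "d \<in> GF p s" "tlevel (tl c @ [d]) = tlevel c - 1"
    using parent_tuple[OF c] by auto
  have "d = (tl c @ [d]) ! (N - 1)"
    using c N_pos by (simp add: tuples_def nth_append)
  also have "\<dots> = gzero s"
    using last_entry_zero tl_append_in_tuples[OF c d(1) N_pos] d(2) low False by simp
  finally show ?thesis using d by simp
qed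

lemma tilde_level_shift_zeros:
  assumes c: "c \<in> tuples p s N" and low: "tlevel c \<le> N"
  shows "k \<le> N \<Longrightarrow> drop k c @ replicate k (gzero s) \<in> tuples p s N
    \<and> tlevel (drop k c @ replicate k (gzero s)) = tlevel c - k"
proof (induction k)
  case (Suc k)
  let ?B = "drop k c @ replicate k (gzero s)"
  have "k < length c" using Suc.prems c by (simp add: tuples_def)
  then have "drop (Suc k) c @ replicate (Suc k) (gzero s) = tl ?B @ [gzero s]"
    by (rule drop_append_replicate_Suc)
  then show ?case
    using Suc low tl_append_in_tuples[OF _ gzero_in_GF[OF p_pos] N_pos]
      tilde_level_shift_zero[of ?B] by simp
qed (use c in simp)

lemma Dset_eq_zero:
  assumes B: "B \<in> tuples p s N" and pos: "1 \<le> tlevel B" and low: "tlevel B \<le> N"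
  shows "Dset p s N V r par lab B = {gzero s}"
proof -
  have "d = gzero s" if d: "d \<in> GF p s" and lt: "tlevel (tl B @ [d]) < tlevel B" for d
  proof -
    have "d = (tl B @ [d]) ! (N - 1)"
      using B N_pos by (simp add: tuples_def nth_append)
    also have "\<dots> = gzero s"
      using last_entry_zero tl_append_in_tuples[OF B d N_pos] lt low by simp
    finally show ?thesis .
  qed
  then show ?thesis
    using tilde_level_shift_zero[OF B low] pos gzero_in_GF[OF p_pos]
    by (auto simp: Dset_def)
qed

end

locale compatible_weights = N_valid_tree +
  fixes lam :: "nat list list \<Rightarrow> real"
  assumes compatible: "compatible p s N V r par lab lam"
begin

lemma lam_all_zeros: "lam (zeros @ [gzero s]) = 1"
  using compatible by (simp add: compatible_def replicate_append_same)

lemma lam_zeros_append_nonzero: "\<lbrakk>d \<in> GF p s; d \<noteq> gzero s\<rbrakk> \<Longrightarrow> lam (zeros @ [d]) = 0"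
  using compatible by (simp add: compatible_def)

lemma lam_sum_Dset:
  "\<lbrakk>B \<in> tuples p s N; B \<noteq> zeros\<rbrakk> \<Longrightarrow> (\<Sum>d\<in>Dset p s N V r par lab B. lam (B @ [d])) = 1"
  using compatible by (simp add: compatible_def)

lemma lam_outside_Dset:
  "\<lbrakk>B \<in> tuples p s N; B \<noteq> zeros; d \<in> GF p s; d \<notin> Dset p s N V r par lab B\<rbrakk>
   \<Longrightarrow> lam (B @ [d]) = 0"
  using compatible by (simp add: compatible_def)

lemma lam_append_zero:
  assumes B: "B \<in> tuples p s N" and low: "tlevel B \<le> N"
  shows "lam (B @ [gzero s]) = 1"
proof (cases "B = zeros")
  case True
  then show ?thesis using lam_all_zeros by simp
next
  case False
  then have "1 \<le> tlevel B" using tilde_level_zero_iff[OF B] by simp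
  then show ?thesis using lam_sum_Dset[OF B False] Dset_eq_zero[OF B _ low] by simp
qed

lemma arr_0_eq_1:
  assumes c: "c \<in> tuples p s N" and low: "tlevel c \<le> N"
  shows "arr p s N lam 0 c = 1"
proof -
  have "lam (drop k c @ replicate (k + 1) (gzero s)) = 1" if k: "k < N" for k
  proof -
    have "lam ((drop k c @ replicate k (gzero s)) @ [gzero s]) = 1"
      using tilde_level_shift_zeros[OF c low, of k] k low by (intro lam_append_zero) auto
    then show ?thesis by (simp add: replicate_append_same[symmetric])
  qed
  then show ?thesis by simp
qed

lemma weights_sum_1:
  assumes B: "B \<in> tuples p s N"
  shows "(\<Sum>d\<in>GF p s. lam (B @ [d])) = 1"
proof (cases "B = zeros")
  case True
  have "(\<Sum>d\<in>GF p s. lam (B @ [d])) = (\<Sum>d\<in>{gzero s}. lam (B @ [d]))"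
    using True lam_zeros_append_nonzero gzero_in_GF[OF p_pos]
    by (intro sum.mono_neutral_right finite_GF) auto
  then show ?thesis using True lam_all_zeros by simp
next
  case False
  have "(\<Sum>d\<in>GF p s. lam (B @ [d])) = (\<Sum>d\<in>Dset p s N V r par lab B. lam (B @ [d]))"
    using lam_outside_Dset[OF B False]
    by (intro sum.mono_neutral_right finite_GF) (auto simp: Dset_def)
  then show ?thesis using lam_sum_Dset[OF B False] by simp
qed

text \<open>At the root of \<open>T~\<close> the weight sits on \<open>d = 0\<close>, which leads back to the root
  itself; hence the second disjunct.\<close>

lemma weight_support:
  assumes B: "B \<in> tuples p s N" and d: "d \<in> GF p s" and nonzero: "lam (B @ [d]) \<noteq> 0"
  shows "tlevel (tl B @ [d]) < tlevel B \<or> tlevel (tl B @ [d]) = 0"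
proof (cases "B = zeros")
  case True
  then have "d = gzero s" using lam_zeros_append_nonzero d nonzero by auto
  then have "tl B @ [d] = B"
    using True N_pos tl_replicate_append_same[of N] by (metis less_le_trans zero_less_one)
  then show ?thesis using tilde_level_zero_iff[OF B] True by simp
next
  case False
  then have "d \<in> Dset p s N V r par lab B" using lam_outside_Dset[OF B False d] nonzero by auto
  then show ?thesis by (simp add: Dset_def)
qed

lemma arr_eq_1:
  "\<lbrakk>c \<in> tuples p s N; tlevel c \<le> N + n\<rbrakk> \<Longrightarrow> arr p s N lam n c = 1"
proof (induction n arbitrary: c)
  case 0
  then show ?case using arr_0_eq_1 by simp
next
  case (Suc n)
  have "(\<Sum>d\<in>GF p s. lam (c @ [d]) * arr p s N lam n (tl c @ [d]))
      = (\<Sum>d\<in>GF p s. lam (c @ [d]))"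
  proof (rule sum.cong)
    fix d assume d: "d \<in> GF p s"
    show "lam (c @ [d]) * arr p s N lam n (tl c @ [d]) = lam (c @ [d])"
    proof (cases "lam (c @ [d]) = 0")
      case False
      then have "tlevel (tl c @ [d]) \<le> N + n"
        using weight_support[OF Suc.prems(1) d] Suc.prems(2) by auto
      then show ?thesis
        using Suc.IH tl_append_in_tuples[OF Suc.prems(1) d N_pos] by simp
    qed simp
  qed simp
  then show ?case using weights_sum_1[OF Suc.prems(1)] by simp
qed

end

theorem lemma4p2:
  fixes p s N n :: nat
    and V :: "'v set" and r :: 'v and par :: "'v \<Rightarrow> 'v" and lab :: "'v \<Rightarrow> nat list"
    and \<beta> :: "nat list list \<Rightarrow> complex"
    and i :: "nat list list"
  assumes "prime p" and "1 \<le> s" and "1 \<le> N"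
    and "valid_tree p s N V r par lab"
    and "compatible p s N V r par lab (mask_lambda p s N \<beta>)"
    and "i \<in> tuples p s N"
    and "tilde_level N V r par lab i \<le> N + n"
  shows "arr p s N (mask_lambda p s N \<beta>) n i = 1"
proof -
  interpret compatible_weights p s N V r par lab "mask_lambda p s N \<beta>"
    using assms(1,3-5) prime_gt_0_nat by unfold_locales auto
  show ?thesis using arr_eq_1 assms(6,7) by blast
qed

end
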